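(* Let $\alpha>0$, $u=\mathbf{1}_{[-\alpha,\alpha]}$, $\sigma>0$ with $\sigma^2\le\alpha^2/24$, and $$\mathcal{C}(\mathbf{x}) = \Big\langle\nabla_{\mathbf{x}}[\varphi^{(2)}_{\sigma^2}\ast uu^*](\mathbf{x}),\ \begin{bmatrix}0&-1\\1&0\end{bmatrix}\mathbf{x}\Big\rangle_{\ell^2}.$$ Then $\mathcal{C}(s,t)\ge0$ for every $\mathbf{x}=(s,t)$ with $0\le t\le s$.
   Context: $uu^*(s,t)=u(s)u(t)$; $\varphi^{(2)}_{\sigma^2}(\mathbf{x}) = (2\pi\sigma^2)^{-1}e^{-\|\mathbf{x}\|_2^2/(2\sigma^2)}$ and $\ast$ is convolution on $\mathbb{R}^2$. *)

theory Defs
  imports "HOL-Analysis.Analysis"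
begin

text \<open>Points of the plane are modelled as pairs (s,t) :: real \<times> real, whose inner
  product and norm are the Euclidean (l2) ones.\<close>

definition box_ind :: "real \<Rightarrow> real \<Rightarrow> real" where
  "box_ind \<alpha> s = indicator {-\<alpha>..\<alpha>} s"

text \<open>u u^* (s,t) = u(s) u(t).\<close>
definition tensor_sq :: "(real \<Rightarrow> real) \<Rightarrow> real \<times> real \<Rightarrow> real" where
  "tensor_sq u x = u (fst x) * u (snd x)"

definition gauss2 :: "real \<Rightarrow> real \<times> real \<Rightarrow> real" where
  "gauss2 v x = exp (- ((norm x) ^ 2) / (2 * v)) / (2 * pi * v)"

definition conv2 :: "(real \<times> real \<Rightarrow> real) \<Rightarrow> (real \<times> real \<Rightarrow> real) \<Rightarrow> real \<times> real \<Rightarrow> real" where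
  "conv2 f g x = integral UNIV (\<lambda>y. f (x - y) * g y)"

definition grad :: "(real \<times> real \<Rightarrow> real) \<Rightarrow> real \<times> real \<Rightarrow> real \<times> real" where
  "grad F x = (SOME g. (F has_derivative (\<lambda>h. g \<bullet> h)) (at x))"

text \<open>Rotation by 90 degrees: [[0,-1],[1,0]] (s,t) = (-t, s).\<close>
definition rot90 :: "real \<times> real \<Rightarrow> real \<times> real" where
  "rot90 x = (- snd x, fst x)"

definition Cfun :: "real \<Rightarrow> real \<Rightarrow> real \<times> real \<Rightarrow> real" where
  "Cfun \<alpha> \<sigma> x = grad (conv2 (gauss2 (\<sigma>^2)) (tensor_sq (box_ind \<alpha>))) x \<bullet> rot90 x"

end

(* The Gaussian and the box both factor, so the smoothed square is g(s) g(t) with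
   g = phi * 1_[-alpha,alpha] in one variable, and g' = -D with D(x) = phi(x - alpha) - phi(x + alpha).
   Integrating (x - y) phi(x - y) = v d/dy phi(x - y) over the box gives x g(x) = v D(x) + M(x),
   M the first moment of phi(x - .) over the box; in C(s,t) = t D(s) g(t) - s D(t) g(s) the
   v D(s) D(t) terms then cancel and C = D(s) M(t) - D(t) M(s), an integral over y in [-alpha,alpha].
   Pairing y with -y and using phi(x - y) - phi(x + y) = c phi(x) phi(y) sinh(x y / v), the
   symmetrised integrand is a positive multiple of B (sinh(A s) sinh(B t) - sinh(A t) sinh(B s)) with
   A = alpha/v, B = y/v, |B| <= A. This is nonnegative for 0 <= t <= s because r |-> sinh(r s) / sinh(r t)
   increases on r > 0, which in turn reduces to the monotonicity of x cosh x / sinh x. *)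

theory Submission imports Defs begin

subsection \<open>Hyperbolic inequalities\<close>

lemma le_sinh_mult_cosh:
  fixes x :: real assumes "0 \<le> x" shows "x \<le> sinh x * cosh x"
proof -
  have "2 * x \<le> (exp (2 * x) - inverse (exp (2 * x))) / 2"
    using assms by (intro real_le_x_sinh) simp
  also have "\<dots> = sinh (2 * x)" by (simp add: sinh_def exp_minus)
  also have "\<dots> = 2 * sinh x * cosh x" by (rule sinh_double)
  finally show ?thesis by simp
qed

lemma mult_cosh_div_sinh_mono:
  fixes x y :: real assumes "0 < x" "x \<le> y"
  shows "x * cosh x / sinh x \<le> y * cosh y / sinh y"
proof (rule DERIV_nonneg_imp_nondecreasing[OF assms(2)])
  fix z assume "x \<le> z" "z \<le> y"
  with assms have "0 < z" "0 < sinh z" by auto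
  have "(cosh z + z * sinh z) * sinh z - z * cosh z * cosh z = sinh z * cosh z - z * (cosh z ^ 2 - sinh z ^ 2)"
    by (simp add: algebra_simps power2_eq_square)
  also have "\<dots> = sinh z * cosh z - z" by (simp add: hyperbolic_pythagoras)
  finally have "0 \<le> ((cosh z + z * sinh z) * sinh z - z * cosh z * cosh z) / (sinh z)\<^sup>2"
    using le_sinh_mult_cosh[of z] \<open>0 < z\<close> by simp
  moreover have "((\<lambda>z. z * cosh z / sinh z) has_real_derivative
      ((cosh z + z * sinh z) * sinh z - z * cosh z * cosh z) / (sinh z)\<^sup>2) (at z)"
    using \<open>0 < sinh z\<close> by (auto intro!: derivative_eq_intros simp: power2_eq_square)
  ultimately show "\<exists>d. ((\<lambda>z. z * cosh z / sinh z) has_real_derivative d) (at z) \<and> 0 \<le> d"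
    by blast
qed

lemma sinh_ratio_mono:
  fixes b c s t :: real assumes "0 < t" "t \<le> s" "0 < b" "b \<le> c"
  shows "sinh (b * s) / sinh (b * t) \<le> sinh (c * s) / sinh (c * t)"
proof (rule DERIV_nonneg_imp_nondecreasing[OF assms(4)])
  fix r assume "b \<le> r" "r \<le> c"
  with assms have "0 < r * t" "r * t \<le> r * s" by simp_all
  then have pos: "0 < sinh (r * t)" "0 < sinh (r * s)" by simp_all
  from mult_cosh_div_sinh_mono[OF \<open>0 < r * t\<close> \<open>r * t \<le> r * s\<close>] pos
  have "r * (t * cosh (r * t) * sinh (r * s)) \<le> r * (s * cosh (r * s) * sinh (r * t))"
    by (simp add: field_split_simps)
  then have num: "0 \<le> s * cosh (r * s) * sinh (r * t) - t * cosh (r * t) * sinh (r * s)"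
    using \<open>0 < r * t\<close> \<open>0 < t\<close> by (simp add: zero_less_mult_iff)
  have deriv: "((\<lambda>r. sinh (r * s) / sinh (r * t)) has_real_derivative
      (s * cosh (r * s) * sinh (r * t) - t * cosh (r * t) * sinh (r * s)) / (sinh (r * t))\<^sup>2) (at r)"
    using pos by (auto intro!: derivative_eq_intros simp: power2_eq_square algebra_simps)
  show "\<exists>d. ((\<lambda>r. sinh (r * s) / sinh (r * t)) has_real_derivative d) (at r) \<and> 0 \<le> d"
    using deriv divide_nonneg_nonneg[OF num zero_le_power2] by blast
qed

lemma sinh_cross_sign:
  fixes A B s t :: real assumes "0 \<le> t" "t \<le> s" "\<bar>B\<bar> \<le> A"
  shows "0 \<le> B * (sinh (A * s) * sinh (B * t) - sinh (A * t) * sinh (B * s))"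
proof (cases "t = 0 \<or> B = 0")
  case False
  define b where "b = \<bar>B\<bar>"
  with False assms have "0 < t" "0 < b" "b \<le> A" by auto
  then have "0 < sinh (b * t)" "0 < sinh (A * t)" by auto
  with sinh_ratio_mono[OF \<open>0 < t\<close> \<open>t \<le> s\<close> \<open>0 < b\<close> \<open>b \<le> A\<close>]
  have ratio: "sinh (b * s) * sinh (A * t) \<le> sinh (A * s) * sinh (b * t)"
    by (simp add: field_split_simps)
  show ?thesis
  proof (cases "0 < B")
    case True
    with ratio show ?thesis by (simp add: b_def mult_ac)
  next
    case False
    with \<open>0 < b\<close> have "b = - B" "B < 0" by (auto simp: b_def)
    with ratio have "sinh (A * s) * sinh (B * t) - sinh (A * t) * sinh (B * s) \<le> 0"
      by (simp add: mult_ac)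
    with \<open>B < 0\<close> show ?thesis by (simp add: mult_nonpos_nonpos)
  qed
qed auto

subsection \<open>The one-dimensional Gaussian smoothing of a box\<close>

definition gauss1 :: "real \<Rightarrow> real \<Rightarrow> real" where
  "gauss1 v z = exp (- (z\<^sup>2) / (2 * v)) / sqrt (2 * pi * v)"

definition smoothed_box :: "real \<Rightarrow> real \<Rightarrow> real \<Rightarrow> real" where
  "smoothed_box a v x = integral {-a..a} (\<lambda>y. gauss1 v (x - y))"

definition box_edge_diff :: "real \<Rightarrow> real \<Rightarrow> real \<Rightarrow> real" where
  "box_edge_diff a v x = gauss1 v (x - a) - gauss1 v (x + a)"

definition box_moment :: "real \<Rightarrow> real \<Rightarrow> real \<Rightarrow> real" where
  "box_moment a v x = integral {-a..a} (\<lambda>y. y * gauss1 v (x - y))"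

lemma gauss1_pos: "0 < v \<Longrightarrow> 0 < gauss1 v z"
  by (simp add: gauss1_def)

lemma continuous_on_gauss1 [continuous_intros]:
  "continuous_on S f \<Longrightarrow> continuous_on S (\<lambda>x. gauss1 v (f x))"
  unfolding gauss1_def divide_inverse by (intro continuous_intros)

lemma gauss1_has_real_derivative:
  "0 < v \<Longrightarrow> (gauss1 v has_real_derivative - (z / v) * gauss1 v z) (at z)"
  unfolding gauss1_def by (auto intro!: derivative_eq_intros simp: field_simps power2_eq_square)

lemma gauss1_shift_has_real_derivative:
  assumes "0 < v"
  shows "((\<lambda>y. gauss1 v (x - y)) has_real_derivative (x - y) / v * gauss1 v (x - y)) (at y)"
  using DERIV_chain2[OF gauss1_has_real_derivative[OF assms] DERIV_diff[OF DERIV_const DERIV_ident]]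
  by simp

lemma has_integral_centered_gauss1:
  assumes "0 < v" "0 \<le> a"
  shows "((\<lambda>y. (x - y) * gauss1 v (x - y)) has_integral v * box_edge_diff a v x) {-a..a}"
proof -
  have "((\<lambda>y. v * gauss1 v (x - y)) has_real_derivative (x - y) * gauss1 v (x - y)) (at y)" for y
    using DERIV_cmult[OF gauss1_shift_has_real_derivative[OF assms(1)], of v] assms(1) by simp
  then have "((\<lambda>y. (x - y) * gauss1 v (x - y)) has_integral
      v * gauss1 v (x - a) - v * gauss1 v (x - - a)) {-a..a}"
    using assms(2)
    by (intro fundamental_theorem_of_calculus)
       (auto simp: has_real_derivative_iff_has_vector_derivative has_vector_derivative_at_within)
  then show ?thesis by (simp add: box_edge_diff_def right_diff_distrib)
qed

lemma integrable_gauss1_shift: "(\<lambda>y. gauss1 v (x - y)) integrable_on {c..d}"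
  by (intro integrable_continuous_interval continuous_intros)

lemma integrable_moment_gauss1_shift: "(\<lambda>y. y * gauss1 v (x - y)) integrable_on {c..d}"
  by (intro integrable_continuous_interval continuous_intros)

lemma mult_smoothed_box:
  assumes "0 < v" "0 \<le> a"
  shows "x * smoothed_box a v x = v * box_edge_diff a v x + box_moment a v x"
proof -
  have "((\<lambda>y. (x - y) * gauss1 v (x - y) + y * gauss1 v (x - y)) has_integral
      v * box_edge_diff a v x + box_moment a v x) {-a..a}"
    unfolding box_moment_def
    by (intro has_integral_add has_integral_centered_gauss1 assms integrable_integral
        integrable_moment_gauss1_shift)
  moreover have "((\<lambda>y. x * gauss1 v (x - y)) has_integral x * smoothed_box a v x) {-a..a}"
    unfolding smoothed_box_def
    by (intro has_integral_mult_right integrable_integral integrable_gauss1_shift)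
  ultimately show ?thesis
    by (simp add: algebra_simps has_integral_unique)
qed

lemma smoothed_box_has_real_derivative:
  assumes "0 < v" "0 \<le> a"
  shows "(smoothed_box a v has_real_derivative - box_edge_diff a v x) (at x)"
proof -
  let ?dx = "\<lambda>x y. - ((x - y) / v) * gauss1 v (x - y)"
  have "((\<lambda>x. gauss1 v (x - y)) has_real_derivative ?dx x y) (at x)" for x y
    using DERIV_chain2[OF gauss1_has_real_derivative[OF assms(1)] DERIV_diff[OF DERIV_ident DERIV_const]]
    by simp
  then have "((\<lambda>x. integral (cbox (-a) a) (\<lambda>y. gauss1 v (x - y))) has_real_derivative
      integral (cbox (-a) a) (?dx x)) (at x within UNIV)"
  proof (rule leibniz_rule_field_derivative)
    show "continuous_on (UNIV \<times> cbox (-a) a) (\<lambda>(x, y). ?dx x y)"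
      unfolding case_prod_beta divide_inverse by (intro continuous_intros)
  qed (use integrable_gauss1_shift in auto)
  moreover have "(?dx x has_integral - box_edge_diff a v x) {-a..a}"
    using has_integral_mult_right[OF has_integral_centered_gauss1[OF assms], of "- 1 / v"] assms(1)
    by (simp add: field_simps)
  then have "integral {-a..a} (?dx x) = - box_edge_diff a v x"
    by (rule integral_unique)
  ultimately show ?thesis
    unfolding smoothed_box_def[abs_def] box_real(2) by simp
qed

subsection \<open>The gradient of the smoothed square\<close>

lemma gauss2_eq_mult_gauss1:
  assumes "0 < v"
  shows "gauss2 v z = gauss1 v (fst z) * gauss1 v (snd z)"
proof -
  have "sqrt (2 * pi * v) * sqrt (2 * pi * v) = 2 * pi * v"
    using assms by simp
  moreover have "exp (- ((fst z)\<^sup>2 + (snd z)\<^sup>2) / (2 * v)) =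
      exp (- ((fst z)\<^sup>2) / (2 * v)) * exp (- ((snd z)\<^sup>2) / (2 * v))"
    by (simp add: exp_add[symmetric] diff_divide_distrib)
  ultimately show ?thesis
    by (simp add: gauss2_def gauss1_def norm_prod_def)
qed

lemma conv2_gauss2_tensor_box:
  assumes "0 < v"
  shows "conv2 (gauss2 v) (tensor_sq (box_ind a)) =
    (\<lambda>p. smoothed_box a v (fst p) * smoothed_box a v (snd p))"
proof
  fix p :: "real \<times> real"
  obtain p1 p2 where p: "p = (p1, p2)" by fastforce
  let ?h = "\<lambda>y. gauss1 v (p1 - fst y) * gauss1 v (p2 - snd y)"
  have "(\<lambda>y. gauss2 v (p - y) * tensor_sq (box_ind a) y) =
      (\<lambda>y. if y \<in> cbox (-a, -a) (a, a) then ?h y else 0)"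
    by (auto simp: p gauss2_eq_mult_gauss1[OF assms] tensor_sq_def box_ind_def cbox_Pair_eq
        indicator_def fun_eq_iff)
  then have "conv2 (gauss2 v) (tensor_sq (box_ind a)) p = integral (cbox (-a, -a) (a, a)) ?h"
    by (simp add: conv2_def integral_restrict_UNIV)
  also have "\<dots> = integral (cbox (-a) a) (\<lambda>x. integral (cbox (-a) a) (\<lambda>y. ?h (x, y)))"
    by (rule integral_prod_continuous) (intro continuous_intros)
  also have "\<dots> = smoothed_box a v p1 * smoothed_box a v p2"
    by (simp add: smoothed_box_def)
  finally show "conv2 (gauss2 v) (tensor_sq (box_ind a)) p =
      smoothed_box a v (fst p) * smoothed_box a v (snd p)"
    by (simp add: p)
qed

lemma grad_eqI:
  assumes "(F has_derivative (\<lambda>h. G \<bullet> h)) (at x)"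
  shows "grad F x = G"
proof -
  let ?g = "SOME g. (F has_derivative (\<lambda>h. g \<bullet> h)) (at x)"
  have "(F has_derivative (\<lambda>h. ?g \<bullet> h)) (at x)"
    using assms by (rule someI)
  then have "(\<lambda>h. ?g \<bullet> h) = (\<lambda>h. G \<bullet> h)"
    using assms by (rule has_derivative_unique)
  then have "?g \<bullet> (?g - G) = G \<bullet> (?g - G)"
    by (rule fun_cong)
  then have "(?g - G) \<bullet> (?g - G) = 0"
    by (simp add: inner_diff_left)
  then show ?thesis
    unfolding grad_def by simp
qed

lemma grad_conv2_gauss2_tensor_box:
  assumes "0 < v" "0 \<le> a"
  shows "grad (conv2 (gauss2 v) (tensor_sq (box_ind a))) (s, t) =
    (- box_edge_diff a v s * smoothed_box a v t, - smoothed_box a v s * box_edge_diff a v t)"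
proof (rule grad_eqI)
  let ?g = "smoothed_box a v" and ?D = "box_edge_diff a v"
  have "(?g has_derivative (\<lambda>h. - ?D x * h)) (at x)" for x
    using smoothed_box_has_real_derivative[OF assms] by (rule has_field_derivative_imp_has_derivative)
  then have "((\<lambda>p. ?g (fst p)) has_derivative (\<lambda>h. - ?D s * fst h)) (at (s, t))"
    and "((\<lambda>p. ?g (snd p)) has_derivative (\<lambda>h. - ?D t * snd h)) (at (s, t))"
    using has_derivative_compose[OF has_derivative_fst[OF has_derivative_ident, of "at (s, t)"], of ?g]
      has_derivative_compose[OF has_derivative_snd[OF has_derivative_ident, of "at (s, t)"], of ?g]
    by simp_all blast+
  then have "((\<lambda>p. ?g (fst p) * ?g (snd p)) has_derivative
      (\<lambda>h. ?g s * (- ?D t * snd h) + (- ?D s * fst h) * ?g t)) (at (s, t))"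
    using has_derivative_mult by fastforce
  moreover have "(\<lambda>h. ?g s * (- ?D t * snd h) + (- ?D s * fst h) * ?g t) =
      (\<lambda>h. (- ?D s * ?g t, - ?g s * ?D t) \<bullet> h)"
    by (auto simp: inner_prod_def algebra_simps)
  ultimately show "(conv2 (gauss2 v) (tensor_sq (box_ind a)) has_derivative
      (\<lambda>h. (- ?D s * ?g t, - ?g s * ?D t) \<bullet> h)) (at (s, t))"
    by (simp add: conv2_gauss2_tensor_box[OF assms(1)])
qed

lemma Cfun_eq_moment_cross:
  assumes "\<sigma> \<noteq> 0" "0 \<le> \<alpha>"
  defines "v \<equiv> \<sigma>\<^sup>2"
  shows "Cfun \<alpha> \<sigma> (s, t) =
    box_edge_diff \<alpha> v s * box_moment \<alpha> v t - box_edge_diff \<alpha> v t * box_moment \<alpha> v s"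
proof -
  have "0 < v" using assms(1) by (simp add: v_def)
  \<comment> \<open>By \<open>mult_smoothed_box\<close>; the two terms with factor \<open>v\<close> cancel.\<close>
  then have "Cfun \<alpha> \<sigma> (s, t) =
      box_edge_diff \<alpha> v s * (t * smoothed_box \<alpha> v t) - box_edge_diff \<alpha> v t * (s * smoothed_box \<alpha> v s)"
    using assms(2)
    by (simp add: Cfun_def v_def[symmetric] grad_conv2_gauss2_tensor_box rot90_def algebra_simps)
  also have "\<dots> = box_edge_diff \<alpha> v s * box_moment \<alpha> v t - box_edge_diff \<alpha> v t * box_moment \<alpha> v s"
    using \<open>0 < v\<close> assms(2) by (simp add: mult_smoothed_box algebra_simps)
  finally show ?thesis .
qed

subsection \<open>Positivity of the moment cross term\<close>

lemma gauss1_diff_eq_sinh: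
  assumes "0 < v"
  shows "gauss1 v (x - y) - gauss1 v (x + y) =
    2 * sqrt (2 * pi * v) * gauss1 v x * gauss1 v y * sinh (x * y / v)"
proof -
  have "exp (- ((x - y)\<^sup>2) / (2 * v)) = exp (- (x\<^sup>2) / (2 * v)) * exp (- (y\<^sup>2) / (2 * v)) * exp (x * y / v)"
    and "exp (- ((x + y)\<^sup>2) / (2 * v)) = exp (- (x\<^sup>2) / (2 * v)) * exp (- (y\<^sup>2) / (2 * v)) * exp (- (x * y / v))"
    unfolding exp_add[symmetric] using assms by (simp_all add: field_simps power2_eq_square)
  with assms show ?thesis
    by (simp add: gauss1_def sinh_field_def field_simps)
qed

lemma integral_nonneg_by_symmetrization:
  fixes f :: "real \<Rightarrow> real"
  assumes "f integrable_on {-a..a}" and "\<And>y. y \<in> {-a..a} \<Longrightarrow> 0 \<le> f y + f (- y)"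
  shows "0 \<le> integral {-a..a} f"
proof -
  have reflected: "(\<lambda>y. f (- y)) integrable_on {-a..a}" "integral {-a..a} (\<lambda>y. f (- y)) = integral {-a..a} f"
    using assms(1) Henstock_Kurzweil_Integration.integrable_reflect_real[of f a "-a"]
      Henstock_Kurzweil_Integration.integral_reflect_real[of a "-a" f]
    by simp_all
  have "0 \<le> integral {-a..a} (\<lambda>y. f y + f (- y))"
    using assms integrable_add[OF assms(1) reflected(1)] by (intro integral_nonneg) auto
  also have "\<dots> = 2 * integral {-a..a} f"
    using integral_add[OF assms(1) reflected(1)] reflected(2) by simp
  finally show ?thesis by simp
qed

lemma moment_cross_integrand_symmetric_nonneg:
  assumes "0 < v" "0 \<le> t" "t \<le> s" "\<bar>y\<bar> \<le> a"
  defines "P \<equiv> \<lambda>y. y * (box_edge_diff a v s * gauss1 v (t - y) - box_edge_diff a v t * gauss1 v (s - y))"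
  shows "0 \<le> P y + P (- y)"
proof -
  let ?G = "gauss1 v" and ?k = "2 * sqrt (2 * pi * v)"
  have "P y + P (- y) = y * (box_edge_diff a v s * (?G (t - y) - ?G (t + y))
      - box_edge_diff a v t * (?G (s - y) - ?G (s + y)))"
    by (simp add: P_def algebra_simps)
  also have "\<dots> = v * ?k\<^sup>2 * (?G s * ?G a * ?G t * ?G y) *
      ((y / v) * (sinh ((a / v) * s) * sinh ((y / v) * t) - sinh ((a / v) * t) * sinh ((y / v) * s)))"
    unfolding box_edge_diff_def gauss1_diff_eq_sinh[OF assms(1)] using assms(1)
    by (simp add: field_simps power2_eq_square)
  also have "0 \<le> \<dots>"
  proof (rule mult_nonneg_nonneg)
    show "0 \<le> v * ?k\<^sup>2 * (?G s * ?G a * ?G t * ?G y)"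
      using assms(1) gauss1_pos[OF assms(1)] by (simp add: less_imp_le)
    have "\<bar>y / v\<bar> \<le> a / v"
      using assms(1,4) by (simp add: divide_right_mono)
    then show "0 \<le> (y / v) *
        (sinh ((a / v) * s) * sinh ((y / v) * t) - sinh ((a / v) * t) * sinh ((y / v) * s))"
      by (rule sinh_cross_sign[OF assms(2,3)])
  qed
  finally show ?thesis .
qed

lemma moment_cross_nonneg:
  assumes "0 < v" "0 \<le> a" "0 \<le> t" "t \<le> s"
  shows "0 \<le> box_edge_diff a v s * box_moment a v t - box_edge_diff a v t * box_moment a v s"
proof -
  let ?P = "\<lambda>y. y * (box_edge_diff a v s * gauss1 v (t - y) - box_edge_diff a v t * gauss1 v (s - y))"
  have "((\<lambda>y. box_edge_diff a v s * (y * gauss1 v (t - y)) - box_edge_diff a v t * (y * gauss1 v (s - y)))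
      has_integral box_edge_diff a v s * box_moment a v t - box_edge_diff a v t * box_moment a v s) {-a..a}"
    unfolding box_moment_def
    by (intro has_integral_diff has_integral_mult_right integrable_integral integrable_moment_gauss1_shift)
  moreover have "(\<lambda>y. box_edge_diff a v s * (y * gauss1 v (t - y)) - box_edge_diff a v t * (y * gauss1 v (s - y)))
      = ?P"
    by (simp add: fun_eq_iff algebra_simps)
  ultimately have "(?P has_integral
      box_edge_diff a v s * box_moment a v t - box_edge_diff a v t * box_moment a v s) {-a..a}"
    by simp
  moreover have "0 \<le> integral {-a..a} ?P"
    using moment_cross_integrand_symmetric_nonneg[OF assms(1,3,4)]
    by (intro integral_nonneg_by_symmetrization integrable_continuous_interval continuous_intros) auto
  ultimately show ?thesis
    by (simp add: integral_unique)
qed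

theorem mainTheorem12:
  fixes \<alpha> \<sigma> s t :: real
  assumes "\<alpha> > 0" and "\<sigma> > 0" and "\<sigma>^2 \<le> \<alpha>^2 / 24"
    and "0 \<le> t" and "t \<le> s"
  shows "Cfun \<alpha> \<sigma> (s, t) \<ge> 0"
proof -
  have "0 \<le> box_edge_diff \<alpha> (\<sigma>\<^sup>2) s * box_moment \<alpha> (\<sigma>\<^sup>2) t
      - box_edge_diff \<alpha> (\<sigma>\<^sup>2) t * box_moment \<alpha> (\<sigma>\<^sup>2) s"
    using assms(1,2,4,5) by (intro moment_cross_nonneg) auto
  also have "\<dots> = Cfun \<alpha> \<sigma> (s, t)"
    using assms(1,2) by (intro Cfun_eq_moment_cross[symmetric]) auto
  finally show ?thesis .
qed

end
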